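(* Fix $\alpha\in[0,1)$, $p>1$ and $C>0$. If $X\sim\mathrm{RDTS}^p_\alpha(1,C)$, then $$X\stackrel{d}{=}X_0+\sum_{j=1}^{N_1}X_j+\sum_{j=1}^{N_2}Y_j,$$ where $N_1,N_2,X_0,X_1,X_2,\dots,Y_1,Y_2,\dots$ are independent random variables such that: (1) $N_1\sim\mathrm{Pois}(CK_1)$ and $N_2\sim\mathrm{Pois}(CK_2)$, where $$K_1=\int_1^\infty e^{-x^p}x^{-1-\alpha}\,dx=\frac1p\int_1^\infty e^{-x}x^{-1-\alpha/p}\,dx,\qquad K_2=\int_0^1\left(e^{-x^p}-e^{-x}\right)x^{-\alpha-1}\,dx;$$ (2) $X_0\sim\mathrm{TTS}_\alpha(C)$; (3) $X_1,X_2,\dots$ all have pdf $f_1(x)=\frac1{K_1}e^{-x^p}x^{-1-\alpha}$ for $x>1$ (and $0$ otherwise); (4) $Y_1,Y_2,\dots$ all have pdf $f_2(x)=\frac1{K_2}\left(e^{-x^p}-e^{-x}\right)x^{-\alpha-1}$ for $0<x<1$ (and $0$ otherwise). (An empty sum is $0$.)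
   Context: For $\alpha<1$, $p>1$, $b>0$, $C>0$, $\mathrm{RDTS}^p_\alpha(b,C)$ denotes the infinitely divisible distribution on $\mathbb R$ with characteristic function $z\mapsto \exp\{C\int_0^\infty(e^{ixz}-1)x^{-1-\alpha}e^{-b^px^p}\,dx\}$. For $C>0$ and $\alpha\in[0,1)$, the truncated tempered stable distribution $\mathrm{TTS}_\alpha(C)$ is the infinitely divisible distribution with characteristic function $z\mapsto\exp\{C\int_0^1(e^{ixz}-1)x^{-1-\alpha}e^{-x}\,dx\}$. $\mathrm{Pois}(\lambda)$ denotes the Poisson distribution with mean $\lambda$. *)

theory Defs
  imports "HOL-Probability.Probability"
begin

definition rdts_cf :: "real \<Rightarrow> real \<Rightarrow> real \<Rightarrow> real \<Rightarrow> real \<Rightarrow> complex" where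
  "rdts_cf p \<alpha> b C z = exp (of_real C * set_lebesgue_integral lborel {0<..}
      (\<lambda>x::real. (iexp (x * z) - 1) * of_real (x powr (-1 - \<alpha>) * exp (- ((b * x) powr p)))))"

definition is_RDTS :: "real \<Rightarrow> real \<Rightarrow> real \<Rightarrow> real \<Rightarrow> real measure \<Rightarrow> bool" where
  "is_RDTS p \<alpha> b C \<mu> \<longleftrightarrow> real_distribution \<mu> \<and> (\<forall>z. char \<mu> z = rdts_cf p \<alpha> b C z)"

definition tts_cf :: "real \<Rightarrow> real \<Rightarrow> real \<Rightarrow> complex" where
  "tts_cf \<alpha> C z = exp (of_real C * set_lebesgue_integral lborel {0<..<1}
      (\<lambda>x::real. (iexp (x * z) - 1) * of_real (x powr (-1 - \<alpha>) * exp (- x))))"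

definition is_TTS :: "real \<Rightarrow> real \<Rightarrow> real measure \<Rightarrow> bool" where
  "is_TTS \<alpha> C \<mu> \<longleftrightarrow> real_distribution \<mu> \<and> (\<forall>z. char \<mu> z = tts_cf \<alpha> C z)"

definition K1 :: "real \<Rightarrow> real \<Rightarrow> real" where
  "K1 p \<alpha> = (LBINT x:{1<..}. exp (- (x powr p)) * x powr (-1 - \<alpha>))"

definition K2 :: "real \<Rightarrow> real \<Rightarrow> real" where
  "K2 p \<alpha> = (LBINT x:{0<..<1}. (exp (- (x powr p)) - exp (- x)) * x powr (- \<alpha> - 1))"

definition f1 :: "real \<Rightarrow> real \<Rightarrow> real \<Rightarrow> real" where
  "f1 p \<alpha> x = (if 1 < x then exp (- (x powr p)) * x powr (-1 - \<alpha>) / K1 p \<alpha> else 0)"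

definition f2 :: "real \<Rightarrow> real \<Rightarrow> real \<Rightarrow> real" where
  "f2 p \<alpha> x = (if 0 < x \<and> x < 1 then (exp (- (x powr p)) - exp (- x)) * x powr (- \<alpha> - 1) / K2 p \<alpha> else 0)"

text \<open>Index set for the independent family: N1, N2, X0, X_j, Y_j (j >= 1).\<close>
datatype idx = IN1 | IN2 | IX0 | IX nat | IY nat

end

theory Submission
  imports Defs
begin

text \<open>
  Since \<open>x powr p \<le> x\<close> on \<open>(0,1)\<close>, the Levy density \<open>x powr (-1-\<alpha>) * exp (-(x powr p))\<close> of
  RDTS splits into three nonnegative parts: the TTS density \<open>x powr (-1-\<alpha>) * exp (-x)\<close> on \<open>(0,1)\<close>,
  the excess \<open>(exp (-(x powr p)) - exp (-x)) * x powr (-1-\<alpha>)\<close> on \<open>(0,1)\<close> and the tail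
  \<open>exp (-(x powr p)) * x powr (-1-\<alpha>)\<close> on \<open>(1,\<infinity>)\<close>. The last two have the finite masses \<open>K2\<close> and
  \<open>K1\<close>, so they contribute \<open>C * Ki * (\<phi>i z - 1)\<close> to the characteristic exponent, where \<open>\<phi>i\<close> is the
  characteristic function of the normalised density \<open>fi\<close>. That is exactly the characteristic
  exponent of a compound Poisson sum, computed by conditioning on \<open>N1\<close> and \<open>N2\<close> and using
  independence. Levy's uniqueness theorem identifies the two laws.
\<close>

lemma char_distr:
  "X \<in> borel_measurable M \<Longrightarrow> char (distr M borel X) z = (CLINT \<omega>|M. iexp (z * X \<omega>))"
  by (simp add: char_def integral_distr)

lemma char_distr_eq_if_same_density:
  assumes "distributed M lborel X f" "distributed M lborel Y f"
  shows "char (distr M borel X) = char (distr M borel Y)"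
proof -
  have "distr M borel V = distr M lborel V" for V :: "'a \<Rightarrow> real"
    by (rule distr_cong) simp_all
  then show ?thesis
    using assms by (simp add: distributed_def)
qed

lemma norm_iexp_minus_one_le_abs: "norm (iexp t - 1) \<le> \<bar>t\<bar>"
  using iexp_approx1[of t 0] by simp

lemma iexp_sum: "iexp (\<Sum>j\<in>A. f j) = (\<Prod>j\<in>A. iexp (f j))"
  by (induction A rule: infinite_finite_induct) (simp_all add: distrib_left exp_add)

lemma (in prob_space) integral_sums_over_values:
  fixes F :: "'a \<Rightarrow> 'b::{banach, second_countable_topology}" and N :: "'a \<Rightarrow> nat"
  assumes N[measurable]: "N \<in> measurable M (count_space UNIV)" and F: "integrable M F"
  shows "(\<lambda>n. \<integral>\<omega>. (if N \<omega> = n then F \<omega> else 0) \<partial>M) sums (\<integral>\<omega>. F \<omega> \<partial>M)"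
proof -
  have restrict: "integrable M (\<lambda>\<omega>. if P (N \<omega>) then F \<omega> else 0)" for P
    by (rule Bochner_Integration.integrable_cong[THEN iffD1, OF refl _
          integrable_mult_indicator[of "{\<omega>\<in>space M. P (N \<omega>)}", OF _ F]])
       (auto simp: indicator_def)
  have partial_sums: "(\<Sum>n<k. \<integral>\<omega>. (if N \<omega> = n then F \<omega> else 0) \<partial>M)
      = (\<integral>\<omega>. (if N \<omega> < k then F \<omega> else 0) \<partial>M)" for k
    by (subst Bochner_Integration.integral_sum[symmetric, OF restrict])
       (auto intro!: Bochner_Integration.integral_cong simp: sum.If_cases)
  have "(\<lambda>k. \<integral>\<omega>. (if N \<omega> < k then F \<omega> else 0) \<partial>M) \<longlonglongrightarrow> (\<integral>\<omega>. F \<omega> \<partial>M)"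
  proof (rule integral_dominated_convergence[where w="\<lambda>\<omega>. norm (F \<omega>)"])
    show "AE \<omega> in M. (\<lambda>k. if N \<omega> < k then F \<omega> else 0) \<longlonglongrightarrow> F \<omega>"
    proof (rule AE_I2)
      fix \<omega>
      show "(\<lambda>k. if N \<omega> < k then F \<omega> else 0) \<longlonglongrightarrow> F \<omega>"
        by (intro tendsto_eventually eventually_sequentiallyI[of "Suc (N \<omega>)"]) auto
    qed
  qed (use F restrict in auto)
  then show ?thesis
    unfolding sums_def partial_sums .
qed

lemma sums_poisson_pmf_power:
  fixes c :: "'a::{real_normed_field, banach}"
  assumes "0 < l"
  shows "(\<lambda>n. of_real (pmf (poisson_pmf l) n) * c ^ n) sums exp (of_real l * (c - 1))"
proof -
  have "(\<lambda>n. of_real (exp (-l)) * ((of_real l * c) ^ n /\<^sub>R fact n))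
      sums (of_real (exp (-l)) * exp (of_real l * c))"
    by (intro sums_mult exp_converges)
  moreover have "of_real (exp (-l)) = exp (- of_real l :: 'a)"
    by (metis exp_of_real of_real_minus)
  then have "of_real (exp (-l)) * exp (of_real l * c) = exp (of_real l * (c - 1))"
    by (simp add: mult_exp_exp algebra_simps)
  ultimately show ?thesis
    using assms by (simp add: scaleR_conv_of_real power_mult_distrib field_simps)
qed

lemma (in prob_space) integral_poisson_mixture:
  fixes F :: "'a \<Rightarrow> complex" and N :: "'a \<Rightarrow> nat"
  assumes "N \<in> measurable M (count_space UNIV)" "integrable M F" "0 < l"
    and "\<And>n. (CLINT \<omega>|M. if N \<omega> = n then F \<omega> else 0) = of_real (pmf (poisson_pmf l) n) * c ^ n * a"
  shows "(CLINT \<omega>|M. F \<omega>) = exp (of_real l * (c - 1)) * a"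
  using integral_sums_over_values[OF assms(1,2)] sums_mult2[OF sums_poisson_pmf_power[OF assms(3)], where c=a]
  by (simp add: assms(4) sums_unique2)

lemma (in prob_space) integral_of_bool_eq_pmf:
  assumes [measurable]: "N \<in> measurable M (count_space UNIV)"
    and "distr M (count_space UNIV) N = measure_pmf q"
  shows "(CLINT \<omega>|M. of_bool (N \<omega> = n)) = of_real (pmf q n)"
proof -
  have "(CLINT \<omega>|M. of_bool (N \<omega> = n)) = (CLINT \<omega>|M. of_real (indicator {n} (N \<omega>)))"
    by (intro Bochner_Integration.integral_cong) (auto simp: indicator_def)
  also have "\<dots> = of_real (LINT \<omega>|M. indicator {n} (N \<omega>))"
    by (rule integral_complex_of_real)
  also have "\<dots> = of_real (LINT k|distr M (count_space UNIV) N. indicator {n} k)"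
    by (subst integral_distr) simp_all
  also have "\<dots> = of_real (pmf q n)"
    by (simp add: assms(2) measure_pmf_single)
  finally show ?thesis .
qed

lemma set_integrable_powr_0_1:
  fixes a :: real
  assumes "a < 1"
  shows "set_integrable lborel {0<..<1} (\<lambda>x::real. x powr (- a))"
proof -
  have "(\<lambda>x::real. x powr (- a)) integrable_on {0<..1}"
    by (rule integrable_on_powr_from_0') (use assms in auto)
  then have "(\<lambda>x::real. x powr (- a)) absolutely_integrable_on {0<..1}"
    by (rule nonnegative_absolutely_integrable_1) auto
  then have "set_integrable lborel {0<..1} (\<lambda>x::real. x powr (- a))"
    by (simp add: set_integrable_def integrable_completion[symmetric])
  then show ?thesis
    by (rule set_integrable_subset) auto
qed

lemma normalized_density_char:
  fixes g f :: "real \<Rightarrow> real" and Y :: "'a \<Rightarrow> real"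
  assumes "prob_space M" and D: "distributed M lborel Y (\<lambda>x. ennreal (f x))"
    and f: "\<And>x. f x = (if x \<in> S then g x / K else 0)"
    and g_nonneg: "\<And>x. x \<in> S \<Longrightarrow> 0 \<le> g x"
    and [measurable]: "S \<in> sets borel" "g \<in> borel_measurable borel"
  shows "0 < K" and "set_integrable lborel S g"
    and "of_real K * char (distr M borel Y) z = (CLINT x:S|lborel. of_real (g x) * iexp (z * x))"
proof -
  interpret prob_space M by fact
  have [measurable]: "Y \<in> borel_measurable M"
    using D by (auto simp: distributed_def)
  have distr_Y: "distr M lborel Y = density lborel (\<lambda>x. ennreal (f x))"
    using D by (simp add: distributed_def)
  have [measurable]: "f \<in> borel_measurable borel"
    unfolding f[abs_def] by measurable
  have "emeasure (distr M lborel Y) UNIV = 1"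
    by (simp add: emeasure_distr emeasure_space_1)
  then have total: "(\<integral>\<^sup>+x. ennreal (f x) \<partial>lborel) = 1"
    by (simp add: distr_Y emeasure_density)
  show K_pos: "0 < K"
  proof (rule ccontr)
    assume "\<not> 0 < K"
    then have "f x \<le> 0" for x
      using g_nonneg by (auto simp: f divide_nonneg_nonpos)
    then have "(\<integral>\<^sup>+x. ennreal (f x) \<partial>lborel) = 0"
      by (simp add: ennreal_neg)
    with total show False by simp
  qed
  have f_nonneg: "0 \<le> f x" for x
    using g_nonneg K_pos by (auto simp: f)
  have "integrable lborel f"
    using f_nonneg total by (intro integrableI_nonneg) auto
  then have "integrable lborel (\<lambda>x. K * f x)"
    by simp
  moreover have "K * f x = indicator S x *\<^sub>R g x" for x
    using K_pos by (simp add: f indicator_def)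
  ultimately show "set_integrable lborel S g"
    unfolding set_integrable_def by simp
  have "of_real K * char (distr M borel Y) z = of_real K * (CLINT x|distr M lborel Y. iexp (z * x))"
    by (simp add: char_def integral_distr)
  also have "\<dots> = of_real K * (CLINT x|lborel. f x *\<^sub>R iexp (z * x))"
    unfolding distr_Y by (subst integral_density) (auto simp: f_nonneg)
  also have "\<dots> = (CLINT x|lborel. of_real K * (f x *\<^sub>R iexp (z * x)))"
    by (rule integral_mult_right_zero[symmetric])
  also have "\<dots> = (CLINT x|lborel. indicator S x *\<^sub>R (of_real (g x) * iexp (z * x)))"
    using K_pos by (intro Bochner_Integration.integral_cong) (auto simp: f indicator_def scaleR_conv_of_real)
  finally show "of_real K * char (distr M borel Y) z = (CLINT x:S|lborel. of_real (g x) * iexp (z * x))"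
    by (simp only: set_lebesgue_integral_def)
qed

definition rdts_tail_density :: "real \<Rightarrow> real \<Rightarrow> real \<Rightarrow> real" where
  "rdts_tail_density p \<alpha> x = exp (- (x powr p)) * x powr (-1 - \<alpha>)"

definition rdts_excess_density :: "real \<Rightarrow> real \<Rightarrow> real \<Rightarrow> real" where
  "rdts_excess_density p \<alpha> x = (exp (- (x powr p)) - exp (- x)) * x powr (- \<alpha> - 1)"

lemma borel_measurable_rdts_densities [measurable]:
  "rdts_tail_density p \<alpha> \<in> borel_measurable borel" "rdts_excess_density p \<alpha> \<in> borel_measurable borel"
  unfolding rdts_tail_density_def[abs_def] rdts_excess_density_def[abs_def] by measurable

lemma rdts_excess_density_nonneg:
  assumes "1 < p" "x \<in> {0<..<1}"
  shows "0 \<le> rdts_excess_density p \<alpha> x"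
  using assms powr_le_one_le[of x p] by (simp add: rdts_excess_density_def)

lemma char_distributed_f1:
  assumes "prob_space M" "distributed M lborel Y (\<lambda>x. ennreal (f1 p \<alpha> x))"
  shows "0 < K1 p \<alpha>" and "set_integrable lborel {1<..} (rdts_tail_density p \<alpha>)"
    and "of_real (K1 p \<alpha>) * char (distr M borel Y) z
      = (CLINT x:{1<..}|lborel. of_real (rdts_tail_density p \<alpha> x) * iexp (z * x))"
  using normalized_density_char[OF assms, of "{1<..}" "rdts_tail_density p \<alpha>" "K1 p \<alpha>"]
  by (simp_all add: f1_def rdts_tail_density_def)

lemma char_distributed_f2:
  assumes "1 < p" "prob_space M" "distributed M lborel Y (\<lambda>x. ennreal (f2 p \<alpha> x))"
  shows "0 < K2 p \<alpha>" and "set_integrable lborel {0<..<1} (rdts_excess_density p \<alpha>)"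
    and "of_real (K2 p \<alpha>) * char (distr M borel Y) z
      = (CLINT x:{0<..<1}|lborel. of_real (rdts_excess_density p \<alpha> x) * iexp (z * x))"
  using normalized_density_char[OF assms(2,3), of "{0<..<1}" "rdts_excess_density p \<alpha>" "K2 p \<alpha>"]
    rdts_excess_density_nonneg[OF assms(1)]
  by (simp_all add: f2_def rdts_excess_density_def)

lemma set_integral_iexp_minus_one:
  fixes w :: "real \<Rightarrow> real"
  assumes w: "set_integrable lborel S w" and [measurable]: "S \<in> sets borel" "w \<in> borel_measurable borel"
  shows "set_integrable lborel S (\<lambda>x. (iexp (x * z) - 1) * of_real (w x))"
    and "(CLINT x:S|lborel. (iexp (x * z) - 1) * of_real (w x))
         = (CLINT x:S|lborel. of_real (w x) * iexp (z * x)) - of_real (LBINT x:S. w x)"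
proof -
  have wave: "set_integrable lborel S (\<lambda>x. of_real (w x) * iexp (z * x))"
    by (rule set_integrable_bound[OF w]) (auto simp: set_borel_measurable_def norm_mult simp del: of_real_mult)
  have mass: "set_integrable lborel S (\<lambda>x. complex_of_real (w x))"
    by (rule set_integrable_bound[OF w]) (auto simp: set_borel_measurable_def)
  have integrand: "(iexp (x * z) - 1) * of_real (w x) = of_real (w x) * iexp (z * x) - of_real (w x)" for x
    by (simp add: algebra_simps)
  show "set_integrable lborel S (\<lambda>x. (iexp (x * z) - 1) * of_real (w x))"
    unfolding integrand using wave mass by (rule set_integral_diff)
  show "(CLINT x:S|lborel. (iexp (x * z) - 1) * of_real (w x))
         = (CLINT x:S|lborel. of_real (w x) * iexp (z * x)) - of_real (LBINT x:S. w x)"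
    unfolding integrand set_integral_diff(2)[OF wave mass] set_integral_complex_of_real ..
qed

lemma set_integrable_tts_exponent:
  fixes \<alpha> z :: real
  assumes "\<alpha> < 1"
  shows "set_integrable lborel {0<..<1} (\<lambda>x. (iexp (x * z) - 1) * of_real (x powr (-1 - \<alpha>) * exp (- x)))"
proof (rule set_integrable_bound[OF set_integrable_mult_right[OF set_integrable_powr_0_1[OF assms], of "\<bar>z\<bar>"]])
  show "set_borel_measurable lborel {0<..<1} (\<lambda>x. (iexp (x * z) - 1) * of_real (x powr (-1 - \<alpha>) * exp (- x)))"
    unfolding set_borel_measurable_def by measurable
  show "AE x in lborel. x \<in> {0<..<1} \<longrightarrow>
      norm ((iexp (x * z) - 1) * of_real (x powr (-1 - \<alpha>) * exp (- x))) \<le> norm (\<bar>z\<bar> * x powr - \<alpha>)"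
  proof (intro AE_I2 impI)
    fix x :: real
    assume "x \<in> {0<..<1}"
    then have x: "0 < x" by simp
    have "norm ((iexp (x * z) - 1) * of_real (x powr (-1 - \<alpha>) * exp (- x))) \<le> \<bar>x * z\<bar> * x powr (-1 - \<alpha>)"
      using x norm_iexp_minus_one_le_abs[of "x * z"] mult_mono[of _ _ "exp (- x)" 1]
      by (auto simp: norm_mult simp del: of_real_mult intro!: mult_mono)
    also have "\<dots> = \<bar>z\<bar> * x powr - \<alpha>"
      using x by (simp add: abs_mult powr_mult_base)
    finally show "norm ((iexp (x * z) - 1) * of_real (x powr (-1 - \<alpha>) * exp (- x))) \<le> norm (\<bar>z\<bar> * x powr - \<alpha>)"
      by simp
  qed
qed

lemma rdts_cf_eq_tts_cf_mult:
  fixes \<alpha> p C z :: real and \<phi>1 \<phi>2 :: complex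
  assumes "\<alpha> < 1"
    and tail: "set_integrable lborel {1<..} (rdts_tail_density p \<alpha>)"
    and excess: "set_integrable lborel {0<..<1} (rdts_excess_density p \<alpha>)"
    and \<phi>1: "of_real (K1 p \<alpha>) * \<phi>1 = (CLINT x:{1<..}|lborel. of_real (rdts_tail_density p \<alpha> x) * iexp (z * x))"
    and \<phi>2: "of_real (K2 p \<alpha>) * \<phi>2 = (CLINT x:{0<..<1}|lborel. of_real (rdts_excess_density p \<alpha> x) * iexp (z * x))"
  shows "rdts_cf p \<alpha> 1 C z
    = tts_cf \<alpha> C z * exp (of_real (C * K1 p \<alpha>) * (\<phi>1 - 1)) * exp (of_real (C * K2 p \<alpha>) * (\<phi>2 - 1))"
proof -
  define e where "e x = iexp (x * z) - 1" for x :: real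
  define h0 where "h0 x = x powr (-1 - \<alpha>) * exp (- x)" for x :: real
  define g1 where "g1 = rdts_tail_density p \<alpha>"
  define g2 where "g2 = rdts_excess_density p \<alpha>"
  have g1_meas[measurable]: "g1 \<in> borel_measurable borel"
    and g2_meas[measurable]: "g2 \<in> borel_measurable borel"
    and [measurable]: "h0 \<in> borel_measurable borel" "e \<in> borel_measurable borel"
    unfolding g1_def g2_def h0_def e_def by measurable
  have tts_part: "set_integrable lborel {0<..<1} (\<lambda>x. e x * of_real (h0 x))"
    unfolding e_def h0_def using \<open>\<alpha> < 1\<close> by (rule set_integrable_tts_exponent)
  note excess_part =
    set_integral_iexp_minus_one[OF excess[folded g2_def] greaterThanLessThan_borel g2_meas, of z, folded e_def]
  note tail_part =
    set_integral_iexp_minus_one[OF tail[folded g1_def] greaterThan_borel g1_meas, of z, folded e_def]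
  have K1_integral: "K1 p \<alpha> = (LBINT x:{1<..}. g1 x)"
    and K2_integral: "K2 p \<alpha> = (LBINT x:{0<..<1}. g2 x)"
    unfolding K1_def K2_def g1_def g2_def rdts_tail_density_def rdts_excess_density_def by (rule refl)+
  have pointwise: "indicator {0<..} x *\<^sub>R (e x * of_real (x powr (-1 - \<alpha>) * exp (- ((1 * x) powr p))))
      = indicator {0<..<1} x *\<^sub>R (e x * of_real (h0 x)) + indicator {0<..<1} x *\<^sub>R (e x * of_real (g2 x))
        + indicator {1<..} x *\<^sub>R (e x * of_real (g1 x))" if x: "x \<noteq> 1" for x
  proof -
    have exponent: "x powr (- \<alpha> - 1) = x powr (-1 - \<alpha>)"
      by (rule arg_cong[where f="\<lambda>t. x powr t"]) simp
    have density: "x powr (-1 - \<alpha>) * exp (- (x powr p)) = h0 x + g2 x"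
      unfolding h0_def g2_def rdts_excess_density_def exponent by (simp add: algebra_simps)
    consider "x \<le> 0" | "0 < x" "x < 1" | "1 < x"
      using x by fastforce
    then show ?thesis
    proof cases
      case 2
      then show ?thesis
        by (simp add: density distrib_left del: of_real_mult)
    next
      case 3
      then show ?thesis
        by (simp add: g1_def rdts_tail_density_def mult.commute del: of_real_mult)
    qed simp
  qed
  have "(CLINT x:{0<..}|lborel. e x * of_real (x powr (-1 - \<alpha>) * exp (- ((1 * x) powr p))))
      = (CLINT x:{0<..<1}|lborel. e x * of_real (h0 x)) + (CLINT x:{0<..<1}|lborel. e x * of_real (g2 x))
        + (CLINT x:{1<..}|lborel. e x * of_real (g1 x))"
    unfolding set_lebesgue_integral_def
    using tts_part excess_part(1) tail_part(1) unfolding set_integrable_def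
    by (subst integral_cong_AE[OF _ _ eventually_mono[OF AE_lborel_singleton[of 1] pointwise]])
       (simp_all add: e_def)
  also have "\<dots> = (CLINT x:{0<..<1}|lborel. e x * of_real (h0 x))
      + of_real (K1 p \<alpha>) * (\<phi>1 - 1) + of_real (K2 p \<alpha>) * (\<phi>2 - 1)"
    unfolding excess_part(2) tail_part(2) \<phi>1[folded g1_def, symmetric] \<phi>2[folded g2_def, symmetric]
      K1_integral[symmetric] K2_integral[symmetric]
    by (simp add: algebra_simps)
  finally show ?thesis
    unfolding rdts_cf_def tts_cf_def e_def h0_def
    by (simp add: distrib_left mult_exp_exp mult.assoc)
qed

text \<open>As in the independence hypothesis of the theorem, the counts and the summands of the
  family share the value type \<open>nat + real\<close>.\<close>

definition compound_space :: "idx \<Rightarrow> (nat + real) measure" where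
  "compound_space = (\<lambda>i. case i of IN1 \<Rightarrow> embed_measure (count_space UNIV) Inl
                  | IN2 \<Rightarrow> embed_measure (count_space UNIV) Inl
                  | _ \<Rightarrow> embed_measure borel Inr)"

definition compound_vars :: "('a \<Rightarrow> nat) \<Rightarrow> ('a \<Rightarrow> nat) \<Rightarrow> ('a \<Rightarrow> real) \<Rightarrow> (nat \<Rightarrow> 'a \<Rightarrow> real)
    \<Rightarrow> (nat \<Rightarrow> 'a \<Rightarrow> real) \<Rightarrow> idx \<Rightarrow> 'a \<Rightarrow> nat + real" where
  "compound_vars N1 N2 X0 Xs Ys = (\<lambda>i \<omega>. case i of IN1 \<Rightarrow> Inl (N1 \<omega>) | IN2 \<Rightarrow> Inl (N2 \<omega>)
      | IX0 \<Rightarrow> Inr (X0 \<omega>) | IX j \<Rightarrow> Inr (Xs j \<omega>) | IY j \<Rightarrow> Inr (Ys j \<omega>))"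

definition compound_index :: "idx set" where
  "compound_index = {IN1, IN2, IX0} \<union> {IX j | j. j \<ge> 1} \<union> {IY j | j. j \<ge> 1}"

definition compound_sum :: "('a \<Rightarrow> nat) \<Rightarrow> ('a \<Rightarrow> nat) \<Rightarrow> ('a \<Rightarrow> real) \<Rightarrow> (nat \<Rightarrow> 'a \<Rightarrow> real)
    \<Rightarrow> (nat \<Rightarrow> 'a \<Rightarrow> real) \<Rightarrow> 'a \<Rightarrow> real" where
  "compound_sum N1 N2 X0 Xs Ys \<omega> = X0 \<omega> + (\<Sum>j\<in>{1..N1 \<omega>}. Xs j \<omega>) + (\<Sum>j\<in>{1..N2 \<omega>}. Ys j \<omega>)"

lemma measurable_random_sum:
  fixes N :: "'a \<Rightarrow> nat" and Xs :: "nat \<Rightarrow> 'a \<Rightarrow> 'b::{second_countable_topology, topological_comm_monoid_add}"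
  assumes "N \<in> measurable M (count_space UNIV)" "\<And>j. j \<ge> 1 \<Longrightarrow> Xs j \<in> borel_measurable M"
  shows "(\<lambda>\<omega>. \<Sum>j\<in>{1..N \<omega>}. Xs j \<omega>) \<in> borel_measurable M"
  by (rule measurable_compose_countable[where f="\<lambda>n \<omega>. \<Sum>j\<in>{1..n}. Xs j \<omega>", OF _ assms(1)])
     (auto intro!: borel_measurable_sum assms(2))

lemma measurable_compound_sum:
  assumes "N1 \<in> measurable M (count_space UNIV)" "N2 \<in> measurable M (count_space UNIV)"
    and "X0 \<in> borel_measurable M"
    and "\<And>j. j \<ge> 1 \<Longrightarrow> Xs j \<in> borel_measurable M" "\<And>j. j \<ge> 1 \<Longrightarrow> Ys j \<in> borel_measurable M"
  shows "compound_sum N1 N2 X0 Xs Ys \<in> borel_measurable M"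
  unfolding compound_sum_def[abs_def]
  using assms measurable_random_sum[of N1 M Xs] measurable_random_sum[of N2 M Ys] by measurable

lemma prod_compound_index:
  fixes h :: "idx \<Rightarrow> 'c::comm_monoid_mult"
  shows "(\<Prod>i\<in>{IN1, IN2, IX0} \<union> IX ` {1..n} \<union> IY ` {1..m}. h i)
     = h IN1 * h IN2 * h IX0 * (\<Prod>j\<in>{1..n}. h (IX j)) * (\<Prod>j\<in>{1..m}. h (IY j))"
proof -
  have "(\<Prod>i\<in>IX ` {1..n} \<union> IY ` {1..m}. h i) = (\<Prod>i\<in>IX ` {1..n}. h i) * (\<Prod>i\<in>IY ` {1..m}. h i)"
    by (rule prod.union_disjoint) auto
  moreover have "{IN1, IN2, IX0} \<union> IX ` {1..n} \<union> IY ` {1..m}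
      = insert IN1 (insert IN2 (insert IX0 (IX ` {1..n} \<union> IY ` {1..m})))"
    by auto
  ultimately show ?thesis
    by (simp add: mult.assoc image_iff prod.reindex inj_on_def)
qed

lemma iexp_compound_sum:
  "iexp (z * compound_sum N1 N2 X0 Xs Ys \<omega>)
    = iexp (z * X0 \<omega>) * (\<Prod>j\<in>{1..N1 \<omega>}. iexp (z * Xs j \<omega>)) * (\<Prod>j\<in>{1..N2 \<omega>}. iexp (z * Ys j \<omega>))"
proof -
  have "z * compound_sum N1 N2 X0 Xs Ys \<omega>
      = z * X0 \<omega> + (\<Sum>j\<in>{1..N1 \<omega>}. z * Xs j \<omega>) + (\<Sum>j\<in>{1..N2 \<omega>}. z * Ys j \<omega>)"
    by (simp add: compound_sum_def algebra_simps sum_distrib_left)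
  then show ?thesis
    by (simp only: iexp_sum[symmetric] of_real_add distrib_left exp_add)
qed

lemma (in prob_space) integral_compound_sum_joint:
  fixes N1 N2 :: "'a \<Rightarrow> nat" and X0 :: "'a \<Rightarrow> real" and Xs Ys :: "nat \<Rightarrow> 'a \<Rightarrow> real"
  assumes indep: "indep_vars compound_space (compound_vars N1 N2 X0 Xs Ys) compound_index"
    and N1: "N1 \<in> measurable M (count_space UNIV)" "distr M (count_space UNIV) N1 = measure_pmf q1"
    and N2: "N2 \<in> measurable M (count_space UNIV)" "distr M (count_space UNIV) N2 = measure_pmf q2"
    and [measurable]: "X0 \<in> borel_measurable M"
    and Xs: "\<And>j. j \<ge> 1 \<Longrightarrow> Xs j \<in> borel_measurable M"
      "\<And>j. j \<ge> 1 \<Longrightarrow> char (distr M borel (Xs j)) z = \<phi>1"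
    and Ys: "\<And>j. j \<ge> 1 \<Longrightarrow> Ys j \<in> borel_measurable M"
      "\<And>j. j \<ge> 1 \<Longrightarrow> char (distr M borel (Ys j)) z = \<phi>2"
  shows "(CLINT \<omega>|M. if N2 \<omega> = m then if N1 \<omega> = n then iexp (z * compound_sum N1 N2 X0 Xs Ys \<omega>) else 0 else 0)
    = of_real (pmf q1 n) * of_real (pmf q2 m) * char (distr M borel X0) z * \<phi>1 ^ n * \<phi>2 ^ m"
proof -
  define Z where "Z = compound_vars N1 N2 X0 Xs Ys"
  \<comment> \<open>Each coordinate is tested through its own bounded function, so the integrand is a
      product of independent factors.\<close>
  define g :: "idx \<Rightarrow> nat + real \<Rightarrow> complex" where
    "g i s = (case (i, s) of
        (IN1, Inl k) \<Rightarrow> of_bool (k = n)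
      | (IN2, Inl k) \<Rightarrow> of_bool (k = m)
      | (IN1, Inr _) \<Rightarrow> 0
      | (IN2, Inr _) \<Rightarrow> 0
      | (_, Inl _) \<Rightarrow> 0
      | (_, Inr x) \<Rightarrow> iexp (z * x))" for i s
  define J where "J = {IN1, IN2, IX0} \<union> IX ` {1..n} \<union> IY ` {1..m}"
  have g_meas: "g i \<in> measurable (compound_space i) borel" for i
    by (cases i) (auto simp: compound_space_def g_def intro!: measurable_embed_measure1)
  have indep_J: "indep_vars (\<lambda>_. borel) (\<lambda>i \<omega>. g i (Z i \<omega>)) J"
    by (rule indep_vars_compose2[OF indep_vars_subset[OF indep[folded Z_def]]])
       (auto simp: J_def compound_index_def g_meas)
  have "norm (g i s) \<le> 1" for i s
    by (cases i; cases s) (auto simp: g_def simp del: of_real_mult)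
  moreover have "i \<in> J \<Longrightarrow> (\<lambda>\<omega>. g i (Z i \<omega>)) \<in> borel_measurable M" for i
    using indep_J unfolding indep_vars_def by auto
  ultimately have "i \<in> J \<Longrightarrow> integrable M (\<lambda>\<omega>. g i (Z i \<omega>))" for i
    by (intro integrable_const_bound[where B=1]) auto
  then have "(CLINT \<omega>|M. (\<Prod>i\<in>J. g i (Z i \<omega>))) = (\<Prod>i\<in>J. CLINT \<omega>|M. g i (Z i \<omega>))"
    by (intro indep_vars_lebesgue_integral[OF _ indep_J]) (simp_all add: J_def)
  moreover have "(\<Prod>i\<in>J. g i (Z i \<omega>))
      = (if N2 \<omega> = m then if N1 \<omega> = n then iexp (z * compound_sum N1 N2 X0 Xs Ys \<omega>) else 0 else 0)" for \<omega>
    unfolding J_def prod_compound_index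
    by (simp add: g_def Z_def compound_vars_def iexp_compound_sum del: of_real_mult)
  moreover have "(\<Prod>i\<in>J. CLINT \<omega>|M. g i (Z i \<omega>))
      = of_real (pmf q1 n) * of_real (pmf q2 m) * char (distr M borel X0) z * \<phi>1 ^ n * \<phi>2 ^ m"
    using Xs Ys unfolding J_def prod_compound_index
    by (simp add: g_def Z_def compound_vars_def char_distr
        integral_of_bool_eq_pmf[OF N1] integral_of_bool_eq_pmf[OF N2] del: of_real_mult)
  ultimately show ?thesis
    by simp
qed

lemma (in prob_space) char_compound_sum:
  fixes N1 N2 :: "'a \<Rightarrow> nat" and X0 :: "'a \<Rightarrow> real" and Xs Ys :: "nat \<Rightarrow> 'a \<Rightarrow> real"
  assumes indep: "indep_vars compound_space (compound_vars N1 N2 X0 Xs Ys) compound_index"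
    and N1: "N1 \<in> measurable M (count_space UNIV)" "distr M (count_space UNIV) N1 = measure_pmf (poisson_pmf l1)"
    and N2: "N2 \<in> measurable M (count_space UNIV)" "distr M (count_space UNIV) N2 = measure_pmf (poisson_pmf l2)"
    and "0 < l1" "0 < l2"
    and X0: "X0 \<in> borel_measurable M"
    and Xs: "\<And>j. j \<ge> 1 \<Longrightarrow> Xs j \<in> borel_measurable M"
      "\<And>j. j \<ge> 1 \<Longrightarrow> char (distr M borel (Xs j)) z = \<phi>1"
    and Ys: "\<And>j. j \<ge> 1 \<Longrightarrow> Ys j \<in> borel_measurable M"
      "\<And>j. j \<ge> 1 \<Longrightarrow> char (distr M borel (Ys j)) z = \<phi>2"
  shows "char (distr M borel (compound_sum N1 N2 X0 Xs Ys)) z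
    = char (distr M borel X0) z * exp (of_real l1 * (\<phi>1 - 1)) * exp (of_real l2 * (\<phi>2 - 1))"
proof -
  define F where "F \<omega> = iexp (z * compound_sum N1 N2 X0 Xs Ys \<omega>)" for \<omega>
  define \<phi>0 where "\<phi>0 = char (distr M borel X0) z"
  have [measurable]: "F \<in> borel_measurable M"
    unfolding F_def using measurable_compound_sum[OF N1(1) N2(1) X0 Xs(1) Ys(1)] by measurable
  have bounded: "integrable M (\<lambda>\<omega>. if P \<omega> then F \<omega> else 0)" if [measurable]: "Measurable.pred M P" for P
    by (rule integrable_const_bound[where B=1]) (auto simp: F_def simp del: of_real_mult)
  have [measurable]: "N1 \<in> measurable M (count_space UNIV)" "N2 \<in> measurable M (count_space UNIV)"
    using N1 N2 by auto
  have "(CLINT \<omega>|M. if N1 \<omega> = n then F \<omega> else 0)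
      = of_real (pmf (poisson_pmf l1) n) * \<phi>1 ^ n * (\<phi>0 * exp (of_real l2 * (\<phi>2 - 1)))" for n
  proof -
    have "(CLINT \<omega>|M. if N2 \<omega> = m then if N1 \<omega> = n then F \<omega> else 0 else 0)
        = of_real (pmf (poisson_pmf l2) m) * \<phi>2 ^ m * (of_real (pmf (poisson_pmf l1) n) * \<phi>0 * \<phi>1 ^ n)" for m
      unfolding F_def \<phi>0_def using integral_compound_sum_joint[OF indep N1 N2 X0 Xs Ys, of m n]
      by (simp add: ac_simps)
    then have "(CLINT \<omega>|M. if N1 \<omega> = n then F \<omega> else 0)
        = exp (of_real l2 * (\<phi>2 - 1)) * (of_real (pmf (poisson_pmf l1) n) * \<phi>0 * \<phi>1 ^ n)"
      by (intro integral_poisson_mixture[OF N2(1) bounded \<open>0 < l2\<close>]) simp_all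
    then show ?thesis
      by (simp add: ac_simps)
  qed
  then have "(CLINT \<omega>|M. F \<omega>) = exp (of_real l1 * (\<phi>1 - 1)) * (\<phi>0 * exp (of_real l2 * (\<phi>2 - 1)))"
    by (intro integral_poisson_mixture[OF N1(1) _ \<open>0 < l1\<close>]) (use bounded[of "\<lambda>_. True"] in simp_all)
  then show ?thesis
    using measurable_compound_sum[OF N1(1) N2(1) X0 Xs(1) Ys(1)]
    by (simp add: char_distr F_def \<phi>0_def ac_simps)
qed

theorem theorem1:
  fixes M :: "'a measure" and M' :: "'b measure"
    and p \<alpha> C :: real
    and X :: "'b \<Rightarrow> real"
    and N1 N2 :: "'a \<Rightarrow> nat" and X0 :: "'a \<Rightarrow> real"
    and Xs Ys :: "nat \<Rightarrow> 'a \<Rightarrow> real"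
  assumes "0 \<le> \<alpha>" "\<alpha> < 1" "1 < p" "0 < C"
    and "prob_space M'" "X \<in> borel_measurable M'"
    and "is_RDTS p \<alpha> 1 C (distr M' borel X)"
    and "prob_space M"
    and "N1 \<in> measurable M (count_space UNIV)" "N2 \<in> measurable M (count_space UNIV)"
    and "X0 \<in> borel_measurable M"
    and "\<And>j. j \<ge> 1 \<Longrightarrow> Xs j \<in> borel_measurable M"
    and "\<And>j. j \<ge> 1 \<Longrightarrow> Ys j \<in> borel_measurable M"
    and "prob_space.indep_vars M
           (\<lambda>i. case i of IN1 \<Rightarrow> embed_measure (count_space UNIV) Inl
                  | IN2 \<Rightarrow> embed_measure (count_space UNIV) Inl
                  | _ \<Rightarrow> embed_measure borel Inr)
           (\<lambda>i \<omega>. case i of IN1 \<Rightarrow> Inl (N1 \<omega>) | IN2 \<Rightarrow> Inl (N2 \<omega>) | IX0 \<Rightarrow> Inr (X0 \<omega>)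
                    | IX j \<Rightarrow> Inr (Xs j \<omega>) | IY j \<Rightarrow> Inr (Ys j \<omega>))
           ({IN1, IN2, IX0} \<union> {IX j | j. j \<ge> 1} \<union> {IY j | j. j \<ge> 1})"
    and "distr M (count_space UNIV) N1 = measure_pmf (poisson_pmf (C * K1 p \<alpha>))"
    and "distr M (count_space UNIV) N2 = measure_pmf (poisson_pmf (C * K2 p \<alpha>))"
    and "is_TTS \<alpha> C (distr M borel X0)"
    and "\<And>j. j \<ge> 1 \<Longrightarrow> distributed M lborel (Xs j) (\<lambda>x. ennreal (f1 p \<alpha> x))"
    and "\<And>j. j \<ge> 1 \<Longrightarrow> distributed M lborel (Ys j) (\<lambda>x. ennreal (f2 p \<alpha> x))"
  shows "distr M' borel X =
         distr M borel (\<lambda>\<omega>. X0 \<omega> + (\<Sum>j\<in>{1..N1 \<omega>}. Xs j \<omega>) + (\<Sum>j\<in>{1..N2 \<omega>}. Ys j \<omega>))"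
proof -
  interpret prob_space M by fact
  note tail = char_distributed_f1[OF \<open>prob_space M\<close> assms(18)[OF order_refl]]
  note excess = char_distributed_f2[OF \<open>1 < p\<close> \<open>prob_space M\<close> assms(19)[OF order_refl]]
  have indep: "indep_vars compound_space (compound_vars N1 N2 X0 Xs Ys) compound_index"
    using assms(14) unfolding compound_space_def compound_vars_def compound_index_def .
  have identically_distributed:
    "char (distr M borel (Xs j)) z = char (distr M borel (Xs 1)) z"
    "char (distr M borel (Ys j)) z = char (distr M borel (Ys 1)) z" if "j \<ge> 1" for j z
    using char_distr_eq_if_same_density[OF assms(18)[OF that] assms(18)[OF order_refl]]
      char_distr_eq_if_same_density[OF assms(19)[OF that] assms(19)[OF order_refl]] by simp_all
  have X0_char: "char (distr M borel X0) = tts_cf \<alpha> C"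
    using assms(17) by (auto simp: is_TTS_def)
  have "char (distr M borel (compound_sum N1 N2 X0 Xs Ys)) z = rdts_cf p \<alpha> 1 C z" for z
  proof -
    have "char (distr M borel (compound_sum N1 N2 X0 Xs Ys)) z
      = tts_cf \<alpha> C z * exp (of_real (C * K1 p \<alpha>) * (char (distr M borel (Xs 1)) z - 1))
        * exp (of_real (C * K2 p \<alpha>) * (char (distr M borel (Ys 1)) z - 1))"
      using \<open>0 < C\<close> tail(1) excess(1)
      by (intro char_compound_sum[OF indep assms(9,15,10,16) _ _ assms(11,12) identically_distributed(1)
            assms(13) identically_distributed(2), unfolded X0_char]) simp_all
    also have "\<dots> = rdts_cf p \<alpha> 1 C z"
      by (rule rdts_cf_eq_tts_cf_mult[symmetric, OF \<open>\<alpha> < 1\<close> tail(2) excess(2) tail(3) excess(3)])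
    finally show ?thesis .
  qed
  then have "distr M' borel X = distr M borel (compound_sum N1 N2 X0 Xs Ys)"
    using assms(7) measurable_compound_sum[OF assms(9-13)]
    by (intro Levy_uniqueness) (auto simp: is_RDTS_def real_distribution_distr)
  then show ?thesis
    by (simp add: compound_sum_def[abs_def])
qed

end
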